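(* Let $A$ be an arbitrary $C^*$-algebra and $\mathcal M$ a right Hilbert $A$-module. Then every topologically essential closed submodule $\mathcal N$ of $\mathcal M$ is essential.
   Context: A closed submodule $\mathcal N \subset \mathcal M$ is topologically essential if for every nonzero closed submodule $\mathcal K \subset \mathcal M$ one has $\mathcal N \cap \mathcal K \neq \{0\}$. It is essential if for every nonzero (not necessarily closed) submodule $\mathcal K \subset \mathcal M$ (i.e. linear subspace with $\mathcal K A \subset \mathcal K$) one has $\mathcal N \cap \mathcal K \neq \{0\}$. *)

theory Defs
  imports "HOL-Analysis.Analysis"
begin

text \<open>The carrier is a type of class
  real_normed_algebra + banach (a real Banach algebra, possibly without unit),
  equipped with a complex scalar multiplication scA extending scaleR and an
  involution star satisfying the C*-identity.\<close>

definition cstar_algebra ::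
  "(complex \<Rightarrow> 'a::{real_normed_algebra,banach} \<Rightarrow> 'a) \<Rightarrow> ('a \<Rightarrow> 'a) \<Rightarrow> bool" where
  "cstar_algebra scA star \<longleftrightarrow>
     (\<forall>c a b. scA c (a + b) = scA c a + scA c b) \<and>
     (\<forall>c d a. scA (c + d) a = scA c a + scA d a) \<and>
     (\<forall>c d a. scA (c * d) a = scA c (scA d a)) \<and>
     (\<forall>a. scA 1 a = a) \<and>
     (\<forall>r a. scA (complex_of_real r) a = scaleR r a) \<and>
     (\<forall>c a b. scA c (a * b) = scA c a * b) \<and>
     (\<forall>c a b. scA c (a * b) = a * scA c b) \<and>
     (\<forall>c a. norm (scA c a) = cmod c * norm a) \<and>
     (\<forall>a. star (star a) = a) \<and>
     (\<forall>a b. star (a + b) = star a + star b) \<and>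
     (\<forall>c a. star (scA c a) = scA (cnj c) (star a)) \<and>
     (\<forall>a b. star (a * b) = star b * star a) \<and>
     (\<forall>a. norm (star a * a) = (norm a)\<^sup>2)"

definition cstar_positive :: "('a::{real_normed_algebra} \<Rightarrow> 'a) \<Rightarrow> 'a \<Rightarrow> bool" where
  "cstar_positive star a \<longleftrightarrow> (\<exists>b. a = star b * b)"

text \<open>The carrier is a Banach space (type class banach)
  whose norm is the one induced by the A-valued inner product ip (linear in the
  second variable); scM is the complex scalar multiplication, act the right action.\<close>

definition hilbert_module ::
  "(complex \<Rightarrow> 'a::{real_normed_algebra,banach} \<Rightarrow> 'a) \<Rightarrow> ('a \<Rightarrow> 'a) \<Rightarrow>
   (complex \<Rightarrow> 'm::banach \<Rightarrow> 'm) \<Rightarrow> ('m \<Rightarrow> 'a \<Rightarrow> 'm) \<Rightarrow> ('m \<Rightarrow> 'm \<Rightarrow> 'a) \<Rightarrow> bool" where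
  "hilbert_module scA star scM act ip \<longleftrightarrow>
     (\<forall>c x y. scM c (x + y) = scM c x + scM c y) \<and>
     (\<forall>c d x. scM (c + d) x = scM c x + scM d x) \<and>
     (\<forall>c d x. scM (c * d) x = scM c (scM d x)) \<and>
     (\<forall>x. scM 1 x = x) \<and>
     (\<forall>r x. scM (complex_of_real r) x = scaleR r x) \<and>
     (\<forall>x y a. act (x + y) a = act x a + act y a) \<and>
     (\<forall>x a b. act x (a + b) = act x a + act x b) \<and>
     (\<forall>x a b. act x (a * b) = act (act x a) b) \<and>
     (\<forall>c x a. scM c (act x a) = act (scM c x) a) \<and>
     (\<forall>c x a. scM c (act x a) = act x (scA c a)) \<and>
     (\<forall>x y z. ip x (y + z) = ip x y + ip x z) \<and>
     (\<forall>c x y. ip x (scM c y) = scA c (ip x y)) \<and>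
     (\<forall>x y a. ip x (act y a) = ip x y * a) \<and>
     (\<forall>x y. star (ip x y) = ip y x) \<and>
     (\<forall>x. cstar_positive star (ip x x)) \<and>
     (\<forall>x. ip x x = 0 \<longrightarrow> x = 0) \<and>
     (\<forall>x. norm x = sqrt (norm (ip x x)))"

definition submodule ::
  "(complex \<Rightarrow> 'm::banach \<Rightarrow> 'm) \<Rightarrow> ('m \<Rightarrow> 'a \<Rightarrow> 'm) \<Rightarrow> 'm set \<Rightarrow> bool" where
  "submodule scM act K \<longleftrightarrow>
     0 \<in> K \<and> (\<forall>x\<in>K. \<forall>y\<in>K. x + y \<in> K) \<and> (\<forall>c. \<forall>x\<in>K. scM c x \<in> K) \<and>
     (\<forall>x\<in>K. \<forall>a. act x a \<in> K)"

definition closed_submodule ::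
  "(complex \<Rightarrow> 'm::banach \<Rightarrow> 'm) \<Rightarrow> ('m \<Rightarrow> 'a \<Rightarrow> 'm) \<Rightarrow> 'm set \<Rightarrow> bool" where
  "closed_submodule scM act K \<longleftrightarrow> submodule scM act K \<and> closed K"

definition topologically_essential ::
  "(complex \<Rightarrow> 'm::banach \<Rightarrow> 'm) \<Rightarrow> ('m \<Rightarrow> 'a \<Rightarrow> 'm) \<Rightarrow> 'm set \<Rightarrow> bool" where
  "topologically_essential scM act N \<longleftrightarrow> closed_submodule scM act N \<and>
     (\<forall>K. closed_submodule scM act K \<and> K \<noteq> {0} \<longrightarrow> N \<inter> K \<noteq> {0})"

definition essential ::
  "(complex \<Rightarrow> 'm::banach \<Rightarrow> 'm) \<Rightarrow> ('m \<Rightarrow> 'a \<Rightarrow> 'm) \<Rightarrow> 'm set \<Rightarrow> bool" where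
  "essential scM act N \<longleftrightarrow> closed_submodule scM act N \<and>
     (\<forall>K. submodule scM act K \<and> K \<noteq> {0} \<longrightarrow> N \<inter> K \<noteq> {0})"

end

theory Submission
  imports Defs "HOL-Complex_Analysis.Complex_Analysis"
begin

text \<open>Let \<open>K\<close> be a nonzero submodule and \<open>0 \<noteq> x \<in> K\<close>, with \<open>h = \<langle>x,x\<rangle> = b\<^sup>* b\<close>. A functional
  calculus for \<open>h\<close> gives \<open>e \<noteq> 0\<close> and \<open>g\<close> with \<open>g h e = e\<close>: take \<open>e = f(h)\<close> for a continuous \<open>f\<close>
  vanishing near \<open>0\<close> and \<open>g \<approx> 1/t\<close> on the support of \<open>f\<close>. The right ideal
  \<open>D = {w. g h w = w}\<close> is closed, and \<open>\<parallel>w\<parallel> \<le> \<parallel>g\<parallel> \<parallel>b\<parallel> \<parallel>x w\<parallel>\<close> on \<open>D\<close> because \<open>\<parallel>x w\<parallel> = \<parallel>b w\<parallel>\<close>.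
  Hence \<open>x D \<subseteq> K\<close> is a closed submodule, nonzero as it contains \<open>x e\<close>, and it meets \<open>N\<close>.

  The algebra need not have a unit, so the functional calculus is built from polynomials
  \<open>t p(t)\<close> by uniform approximation, based on \<open>\<parallel>(t p)(k)\<parallel> \<le> sup\<^bsub>[-1,1]\<^esub> |t p(t)|\<close> for
  self-adjoint \<open>k\<close> with \<open>\<parallel>k\<parallel> \<le> 1/2\<close>. To prove this bound, the binomial series gives
  \<open>\<surd>(1 - k\<^sup>2)\<close>, so that \<open>u = k + i\<surd>(1 - k\<^sup>2)\<close> is unitary and the Chebyshev polynomials
  \<open>T\<^sub>j(k) = (u\<^sup>j + u\<^sup>*\<^sup>j)/2\<close> are contractions. Expanding \<open>t p\<close> in Chebyshev polynomials, whose
  coefficients the Cauchy inequality bounds by \<open>2 sup |t p|\<close>, gives the bound up to a factor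
  linear in the degree, and the C*-identity \<open>\<parallel>a\<^bsup>2\<^sup>n\<^esup>\<parallel> = \<parallel>a\<parallel>\<^bsup>2\<^sup>n\<^esup>\<close> removes that factor.\<close>

locale cstar =
  fixes scA :: "complex \<Rightarrow> 'a::{real_normed_algebra,banach} \<Rightarrow> 'a" and star :: "'a \<Rightarrow> 'a"
  assumes cstar_algebra: "cstar_algebra scA star"
begin

lemma scA_add: "scA c (a + b) = scA c a + scA c b"
  using cstar_algebra by (simp add: cstar_algebra_def)

lemma scA_mult_scalar: "scA (c * d) a = scA c (scA d a)"
  using cstar_algebra by (simp add: cstar_algebra_def)

lemma scA_of_real: "scA (complex_of_real r) a = r *\<^sub>R a"
  using cstar_algebra by (simp add: cstar_algebra_def)

lemma scA_mult_left: "scA c (a * b) = scA c a * b"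
  using cstar_algebra by (simp add: cstar_algebra_def)

lemma scA_mult_right: "scA c (a * b) = a * scA c b"
  using cstar_algebra unfolding cstar_algebra_def by metis

lemma star_star [simp]: "star (star a) = a"
  using cstar_algebra by (simp add: cstar_algebra_def)

lemma star_add: "star (a + b) = star a + star b"
  using cstar_algebra by (simp add: cstar_algebra_def)

lemma star_scA: "star (scA c a) = scA (cnj c) (star a)"
  using cstar_algebra by (simp add: cstar_algebra_def)

lemma star_mult: "star (a * b) = star b * star a"
  using cstar_algebra by (simp add: cstar_algebra_def)

lemma norm_star_mult_self: "norm (star a * a) = (norm a)\<^sup>2"
  using cstar_algebra by (simp add: cstar_algebra_def)

lemma star_scaleR: "star (r *\<^sub>R a) = r *\<^sub>R star a"
  by (metis scA_of_real star_scA complex_cnj_complex_of_real)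

lemma star_zero [simp]: "star 0 = 0"
  by (metis scaleR_zero_left star_scaleR)

lemma star_minus: "star (- a) = - star a"
  by (metis scaleR_minus1_left star_scaleR)

lemma star_diff: "star (a - b) = star a - star b"
  by (metis diff_conv_add_uminus star_add star_minus)

lemma star_sum: "star (sum f S) = (\<Sum>i\<in>S. star (f i))"
  by (induction S rule: infinite_finite_induct) (auto simp: star_add)

lemma norm_star [simp]: "norm (star a) = norm a"
proof -
  have le: "norm c \<le> norm (star c)" for c
  proof -
    have "(norm c)\<^sup>2 \<le> norm (star c) * norm c"
      using norm_star_mult_self[of c] norm_mult_ineq[of "star c" c] by simp
    then show ?thesis
      by (cases "c = 0") (auto simp: power2_eq_square)
  qed
  show ?thesis
    using le[of a] le[of "star a"] by simp
qed

lemma norm_mult_star_self: "norm (a * star a) = (norm a)\<^sup>2"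
  using norm_star_mult_self[of "star a"] by simp

lemma bounded_linear_star: "bounded_linear star"
  by (rule bounded_linear_intro[where K=1]) (auto simp: star_add star_scaleR)

lemma scA_zero [simp]: "scA c 0 = 0"
  by (metis add_cancel_right_right scA_add)

lemma scA_uminus: "scA (- c) a = - scA c a"
  by (metis mult_minus1 scA_of_real of_real_1 of_real_minus scaleR_minus1_left scA_mult_scalar)

lemma scA_ii_ii: "scA \<i> (scA \<i> a) = - a"
  by (metis scA_mult_scalar complex_i_mult_minus mult_1_right scA_uminus scA_of_real of_real_1 scaleR_one)

lemma scA_diff: "scA c (a - b) = scA c a - scA c b"
  by (metis add_diff_cancel scA_add diff_add_cancel eq_diff_eq)

end

subsection \<open>Polynomials in an element of a non-unital algebra\<close>

text \<open>Without a unit, \<open>q(k)\<close> itself is not available, but the left multiplication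
  \<open>c \<mapsto> q(k) c\<close> is.\<close>

definition poly_lmult :: "'a::real_normed_algebra \<Rightarrow> real poly \<Rightarrow> 'a \<Rightarrow> 'a" where
  "poly_lmult k q c = (\<Sum>i\<le>degree q. coeff q i *\<^sub>R ((*) k ^^ i) c)"

context
  fixes k :: "'a::real_normed_algebra"
begin

lemma funpow_lmult_mult: "((*) k ^^ i) (c * d) = ((*) k ^^ i) c * d"
  by (induction i) (auto simp: mult.assoc)

lemma funpow_lmult_add: "((*) k ^^ i) (c + d) = ((*) k ^^ i) c + ((*) k ^^ i) d"
  by (induction i) (auto simp: distrib_left)

lemma funpow_lmult_scaleR: "((*) k ^^ i) (r *\<^sub>R c) = r *\<^sub>R ((*) k ^^ i) c"
  by (induction i) auto

lemma funpow_lmult_self_commute: "((*) k ^^ i) k * k = k * ((*) k ^^ i) k"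
  by (simp add: funpow_lmult_mult[symmetric] funpow_swap1)

lemma funpow_lmult_self_mult: "((*) k ^^ i) k * ((*) k ^^ j) k = ((*) k ^^ (i + j + 1)) k"
  by (simp add: funpow_lmult_mult[symmetric] funpow_swap1 funpow_add)

lemma norm_funpow_lmult_le: "norm (((*) k ^^ i) c) \<le> norm k ^ i * norm c"
proof (induction i)
  case (Suc i)
  have "norm (k * ((*) k ^^ i) c) \<le> norm k * norm (((*) k ^^ i) c)"
    by (rule norm_mult_ineq)
  also have "\<dots> \<le> norm k * (norm k ^ i * norm c)"
    using Suc by (simp add: mult_left_mono)
  finally show ?case
    by (simp add: mult.assoc)
qed simp

end

lemma poly_lmult_eq_sum:
  "degree q \<le> n \<Longrightarrow> poly_lmult k q c = (\<Sum>i\<le>n. coeff q i *\<^sub>R ((*) k ^^ i) c)"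
  unfolding poly_lmult_def by (rule sum.mono_neutral_left) (auto simp: coeff_eq_0)

lemma poly_lmult_0 [simp]: "poly_lmult k 0 c = 0"
  by (simp add: poly_lmult_def)

lemma poly_lmult_1 [simp]: "poly_lmult k 1 c = c"
  by (simp add: poly_lmult_def)

lemma poly_lmult_pCons: "poly_lmult k (pCons a q) c = a *\<^sub>R c + k * poly_lmult k q c"
proof -
  have "poly_lmult k (pCons a q) c = (\<Sum>i\<le>Suc (degree q). coeff (pCons a q) i *\<^sub>R ((*) k ^^ i) c)"
    by (rule poly_lmult_eq_sum) (simp add: degree_pCons_le)
  also have "\<dots> = a *\<^sub>R c + (\<Sum>i\<le>degree q. coeff q i *\<^sub>R ((*) k ^^ Suc i) c)"
    by (subst sum.atMost_Suc_shift) simp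
  also have "(\<Sum>i\<le>degree q. coeff q i *\<^sub>R ((*) k ^^ Suc i) c) = k * poly_lmult k q c"
    by (simp add: poly_lmult_def sum_distrib_left mult_scaleR_right)
  finally show ?thesis .
qed

lemma poly_lmult_add: "poly_lmult k (p + q) c = poly_lmult k p c + poly_lmult k q c"
proof -
  let ?n = "max (degree p) (degree q)"
  have "poly_lmult k (p + q) c = (\<Sum>i\<le>?n. coeff (p + q) i *\<^sub>R ((*) k ^^ i) c)"
    by (rule poly_lmult_eq_sum) (simp add: degree_add_le)
  then show ?thesis
    by (simp add: scaleR_add_left sum.distrib poly_lmult_eq_sum[of p ?n] poly_lmult_eq_sum[of q ?n])
qed

lemma poly_lmult_smult: "poly_lmult k (smult r p) c = r *\<^sub>R poly_lmult k p c"
proof -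
  have "poly_lmult k (smult r p) c = (\<Sum>i\<le>degree p. coeff (smult r p) i *\<^sub>R ((*) k ^^ i) c)"
    by (rule poly_lmult_eq_sum) (simp add: degree_smult_le)
  then show ?thesis
    by (simp add: poly_lmult_def scaleR_sum_right)
qed

lemma poly_lmult_diff: "poly_lmult k (p - q) c = poly_lmult k p c - poly_lmult k q c"
  using poly_lmult_add[of k p "- q" c] poly_lmult_smult[of k "- 1" q c] by simp

lemma poly_lmult_sum: "poly_lmult k (\<Sum>j\<in>S. f j) c = (\<Sum>j\<in>S. poly_lmult k (f j) c)"
  by (induction S rule: infinite_finite_induct) (auto simp: poly_lmult_add)

lemma poly_lmult_add_right: "poly_lmult k q (c + d) = poly_lmult k q c + poly_lmult k q d"
  by (simp add: poly_lmult_def funpow_lmult_add scaleR_add_right sum.distrib)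

lemma poly_lmult_scaleR_right: "poly_lmult k q (r *\<^sub>R c) = r *\<^sub>R poly_lmult k q c"
  by (simp add: poly_lmult_def funpow_lmult_scaleR scaleR_sum_right mult.commute)

lemma poly_lmult_lmult: "poly_lmult k q (k * c) = k * poly_lmult k q c"
  by (simp add: poly_lmult_def funpow_swap1[of "(*) k"] sum_distrib_left mult_scaleR_right)

lemma poly_lmult_mult_right: "poly_lmult k q (c * d) = poly_lmult k q c * d"
  by (simp add: poly_lmult_def funpow_lmult_mult sum_distrib_right)

lemma poly_lmult_mult: "poly_lmult k (p * q) c = poly_lmult k p (poly_lmult k q c)"
proof (induction p)
  case (pCons a p)
  have "pCons a p * q = smult a q + pCons 0 (p * q)"
    by simp
  then show ?case
    by (simp add: poly_lmult_add poly_lmult_smult poly_lmult_pCons pCons poly_lmult_add_right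
        poly_lmult_scaleR_right poly_lmult_lmult)
qed simp

text \<open>\<open>poly_lmult k p k\<close> is the value of the polynomial \<open>t p(t)\<close> at \<open>k\<close>.\<close>

lemma poly_lmult_pCons_0: "poly_lmult k (pCons 0 p) c = poly_lmult k p k * c"
  by (simp add: poly_lmult_pCons poly_lmult_lmult[symmetric] poly_lmult_mult_right[symmetric])

lemma (in cstar) star_funpow_lmult_self:
  assumes "star k = k"
  shows "star (((*) k ^^ i) k) = ((*) k ^^ i) k"
proof (induction i)
  case (Suc i)
  then show ?case
    by (simp add: star_mult assms funpow_lmult_self_commute)
qed (simp add: assms)

lemma (in cstar) star_poly_lmult_self:
  "star k = k \<Longrightarrow> star (poly_lmult k q k) = poly_lmult k q k"
  by (simp add: poly_lmult_def star_sum star_scaleR star_funpow_lmult_self)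

subsection \<open>The square root of \<open>1 - k\<^sup>2\<close>\<close>

definition sqrt_coeff :: "nat \<Rightarrow> real" where
  "sqrt_coeff n = ((1/2) gchoose n) * (-1) ^ n"

lemma sqrt_coeff_0 [simp]: "sqrt_coeff 0 = 1"
  by (simp add: sqrt_coeff_def)

lemma abs_gchoose_half_le_1: "\<bar>(1/2::real) gchoose n\<bar> \<le> 1"
proof (induction n)
  case (Suc n)
  have "real (Suc n) * ((1/2::real) gchoose Suc n) = (1/2 - real n) * ((1/2::real) gchoose n)"
    using gbinomial_mult_1[of "1/2::real" n] by (simp add: algebra_simps)
  then have "real (Suc n) * \<bar>(1/2::real) gchoose Suc n\<bar> = \<bar>1/2 - real n\<bar> * \<bar>(1/2::real) gchoose n\<bar>"
    by (metis abs_mult abs_of_nat)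
  also have "\<dots> \<le> real (Suc n) * 1"
    using Suc by (intro mult_mono) auto
  finally show ?case
    by simp
qed simp

lemma abs_sqrt_coeff_le_1: "\<bar>sqrt_coeff n\<bar> \<le> 1"
  using abs_gchoose_half_le_1[of n] by (simp add: sqrt_coeff_def abs_mult)

text \<open>The coefficients of \<open>(\<surd>(1 - x))\<^sup>2 = 1 - x\<close>, by Vandermonde's identity.\<close>

lemma sqrt_coeff_convolution:
  "(\<Sum>i\<le>n. sqrt_coeff i * sqrt_coeff (n - i)) = (if n = 0 then 1 else if n = 1 then -1 else 0)"
proof -
  have "(\<Sum>i\<le>n. sqrt_coeff i * sqrt_coeff (n - i))
      = (\<Sum>i\<le>n. (-1) ^ n * (((1/2::real) gchoose i) * ((1/2) gchoose (n - i))))"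
    by (intro sum.cong refl) (simp add: sqrt_coeff_def power_add[symmetric] mult_ac)
  also have "\<dots> = (-1) ^ n * (\<Sum>i\<le>n. ((1/2::real) gchoose i) * ((1/2) gchoose (n - i)))"
    by (simp add: sum_distrib_left)
  also have "\<dots> = (-1) ^ n * of_nat (1 choose n)"
    using gbinomial_Vandermonde[of "1/2::real" "1/2" n]
    by (simp add: atLeast0AtMost binomial_gbinomial)
  finally show ?thesis
    by (cases n) (auto simp: binomial_eq_0)
qed

text \<open>A self-adjoint \<open>k\<close> with \<open>\<parallel>k\<parallel> \<le> 1/2\<close>: the bound makes the binomial series
  of \<open>\<surd>(1 - k\<^sup>2)\<close> converge geometrically.\<close>

locale small_selfadjoint = cstar +
  fixes k
  assumes star_k: "star k = k" and norm_k_le: "norm k \<le> 1/2"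
begin

text \<open>\<open>sqrt_term n = sqrt_coeff n k\<^bsup>2n\<^esup>\<close> for \<open>n > 0\<close>, so \<open>sqrt_dev = \<surd>(1 - k\<^sup>2) - 1\<close>.\<close>

definition sqrt_term :: "nat \<Rightarrow> 'a" where
  "sqrt_term n = (if n = 0 then 0 else sqrt_coeff n *\<^sub>R ((*) k ^^ (2 * n - 1)) k)"

definition sqrt_dev :: 'a where
  "sqrt_dev = suminf sqrt_term"

lemma norm_sqrt_term_le: "norm (sqrt_term n) \<le> (1/4) ^ n"
proof (cases "n = 0")
  case False
  have "norm (sqrt_term n) = \<bar>sqrt_coeff n\<bar> * norm (((*) k ^^ (2 * n - 1)) k)"
    using False by (simp add: sqrt_term_def)
  also have "\<dots> \<le> 1 * (norm k ^ (2 * n - 1) * norm k)"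
    by (intro mult_mono abs_sqrt_coeff_le_1 norm_funpow_lmult_le) auto
  also have "\<dots> = norm k ^ (2 * n)"
    using False by (simp flip: power_Suc2)
  also have "\<dots> \<le> (1/2) ^ (2 * n)"
    using norm_k_le by (simp add: power_mono)
  finally show ?thesis
    by (simp add: power_mult power2_eq_square)
qed (simp add: sqrt_term_def)

lemma summable_norm_sqrt_term: "summable (\<lambda>n. norm (sqrt_term n))"
  by (rule summable_comparison_test[where g="\<lambda>n. (1/4::real) ^ n"]) (auto simp: norm_sqrt_term_le)

lemma summable_sqrt_term: "summable sqrt_term"
  using summable_norm_sqrt_term summable_norm_cancel by blast

lemma sqrt_term_Cauchy_product:
  "(\<Sum>i\<le>n. sqrt_term i * sqrt_term (n - i)) + 2 *\<^sub>R sqrt_term n = (if n = 1 then - (k * k) else 0)"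
proof (cases "n = 0")
  case False
  let ?k2n = "((*) k ^^ (2 * n - 1)) k"
  have "sqrt_term i * sqrt_term (n - i)
      = (if i = 0 \<or> n \<le> i then 0 else (sqrt_coeff i * sqrt_coeff (n - i)) *\<^sub>R ?k2n)" for i
  proof (cases "i = 0 \<or> n \<le> i")
    case False
    then have exp: "2 * i - 1 + (2 * (n - i) - 1) + 1 = 2 * n - 1"
      by arith
    have "sqrt_term i * sqrt_term (n - i) = (sqrt_coeff i * sqrt_coeff (n - i)) *\<^sub>R
        (((*) k ^^ (2 * i - 1)) k * ((*) k ^^ (2 * (n - i) - 1)) k)"
      using False by (simp add: sqrt_term_def)
    then show ?thesis
      using False by (simp only: funpow_lmult_self_mult exp) simp
  qed (auto simp: sqrt_term_def)
  then have "(\<Sum>i\<le>n. sqrt_term i * sqrt_term (n - i))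
      = (\<Sum>i\<in>{..n} - {0, n}. sqrt_coeff i * sqrt_coeff (n - i)) *\<^sub>R ?k2n"
    by (simp add: scaleR_sum_left sum.If_cases Diff_eq Int_commute not_le Collect_disj_eq
        singleton_conv2 insert_commute)
  also have "(\<Sum>i\<in>{..n} - {0, n}. sqrt_coeff i * sqrt_coeff (n - i))
      = (\<Sum>i\<le>n. sqrt_coeff i * sqrt_coeff (n - i)) - 2 * sqrt_coeff n"
    using False by (simp add: sum_diff)
  finally have "(\<Sum>i\<le>n. sqrt_term i * sqrt_term (n - i))
      = ((if n = 1 then -1 else 0) - 2 * sqrt_coeff n) *\<^sub>R ?k2n"
    using False by (simp add: sqrt_coeff_convolution)
  then show ?thesis
    using False by (auto simp: sqrt_term_def algebra_simps)
qed (simp add: sqrt_term_def)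

lemma sqrt_dev_equation: "sqrt_dev * sqrt_dev + 2 *\<^sub>R sqrt_dev = - (k * k)"
proof -
  have "(\<lambda>n. (\<Sum>i\<le>n. sqrt_term i * sqrt_term (n - i)) + 2 *\<^sub>R sqrt_term n)
      sums (sqrt_dev * sqrt_dev + 2 *\<^sub>R sqrt_dev)"
    unfolding sqrt_dev_def
    by (intro sums_add Cauchy_product_sums sums_scaleR_right summable_sums
        summable_norm_sqrt_term summable_sqrt_term)
  moreover have "(\<lambda>n. (\<Sum>i\<le>n. sqrt_term i * sqrt_term (n - i)) + 2 *\<^sub>R sqrt_term n) sums (- (k * k))"
    unfolding sqrt_term_Cauchy_product using sums_single[of 1 "\<lambda>_. - (k * k)"] by simp
  ultimately show ?thesis
    using sums_unique2 by blast
qed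

lemma sqrt_dev_commute: "k * sqrt_dev = sqrt_dev * k"
proof -
  have "k * sqrt_dev = (\<Sum>n. k * sqrt_term n)"
    unfolding sqrt_dev_def by (rule suminf_mult[symmetric, OF summable_sqrt_term])
  also have "\<dots> = (\<Sum>n. sqrt_term n * k)"
    by (rule arg_cong[where f=suminf]) (simp add: fun_eq_iff sqrt_term_def funpow_lmult_self_commute)
  also have "\<dots> = sqrt_dev * k"
    unfolding sqrt_dev_def by (rule suminf_mult2[symmetric, OF summable_sqrt_term])
  finally show ?thesis .
qed

lemma star_sqrt_dev: "star sqrt_dev = sqrt_dev"
proof -
  have "star sqrt_dev = (\<Sum>n. star (sqrt_term n))"
    unfolding sqrt_dev_def by (rule bounded_linear.suminf[OF bounded_linear_star summable_sqrt_term])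
  also have "\<dots> = sqrt_dev"
    unfolding sqrt_dev_def
    by (rule arg_cong[where f=suminf])
      (simp add: fun_eq_iff sqrt_term_def star_scaleR star_funpow_lmult_self[OF star_k])
  finally show ?thesis .
qed

end

subsection \<open>Chebyshev polynomials of a small self-adjoint element\<close>

context small_selfadjoint
begin

definition sqrt_lmult :: "'a \<Rightarrow> 'a" where
  "sqrt_lmult c = c + sqrt_dev * c"

lemma sqrt_lmult_sqrt_lmult: "sqrt_lmult (sqrt_lmult c) = c - k * (k * c)"
proof -
  have "(sqrt_dev * sqrt_dev + 2 *\<^sub>R sqrt_dev) * c = - (k * k) * c"
    by (simp only: sqrt_dev_equation)
  then show ?thesis
    by (simp add: sqrt_lmult_def algebra_simps scaleR_2)
qed

lemma lmult_sqrt_lmult: "k * sqrt_lmult c = sqrt_lmult (k * c)"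
  by (simp add: sqrt_lmult_def distrib_left mult.assoc[symmetric] sqrt_dev_commute)

text \<open>Left multiplication by \<open>u = k + i\<surd>(1 - k\<^sup>2)\<close> and by \<open>u\<^sup>* = k - i\<surd>(1 - k\<^sup>2)\<close>.\<close>

definition rot :: "'a \<Rightarrow> 'a" where
  "rot c = k * c + scA \<i> (sqrt_lmult c)"

definition rot_inv :: "'a \<Rightarrow> 'a" where
  "rot_inv c = k * c - scA \<i> (sqrt_lmult c)"

lemma rot_add_rot_inv: "rot c + rot_inv c = 2 *\<^sub>R (k * c)"
  by (simp add: rot_def rot_inv_def scaleR_2)

lemma rot_inv_rot [simp]: "rot_inv (rot c) = c"
proof -
  have "rot_inv (rot c) = k * (k * c) + scA \<i> (k * sqrt_lmult c) - scA \<i> (sqrt_lmult (k * c))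
      - scA \<i> (scA \<i> (sqrt_lmult (sqrt_lmult c)))"
    by (simp add: rot_def rot_inv_def sqrt_lmult_def distrib_left scA_add scA_mult_right
        algebra_simps)
  then show ?thesis
    by (simp add: lmult_sqrt_lmult sqrt_lmult_sqrt_lmult scA_ii_ii)
qed

lemma rot_rot_inv [simp]: "rot (rot_inv c) = c"
proof -
  have "rot (rot_inv c) = k * (k * c) - scA \<i> (k * sqrt_lmult c) + scA \<i> (sqrt_lmult (k * c))
      - scA \<i> (scA \<i> (sqrt_lmult (sqrt_lmult c)))"
    by (simp add: rot_def rot_inv_def sqrt_lmult_def distrib_left right_diff_distrib scA_add
        scA_diff scA_mult_right algebra_simps)
  then show ?thesis
    by (simp add: lmult_sqrt_lmult sqrt_lmult_sqrt_lmult scA_ii_ii)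
qed

lemma star_rot_mult: "star (rot c) * y = star c * rot_inv y"
  unfolding rot_def rot_inv_def sqrt_lmult_def
  by (simp add: star_add star_mult star_scA star_k star_sqrt_dev distrib_right distrib_left
      scA_mult_left[symmetric] scA_mult_right[symmetric] scA_uminus scA_add scA_diff mult.assoc
      algebra_simps)

lemma star_rot_inv_mult: "star (rot_inv c) * y = star c * rot y"
  unfolding rot_def rot_inv_def sqrt_lmult_def
  by (simp add: star_diff star_add star_mult star_scA star_k star_sqrt_dev distrib_right distrib_left
      left_diff_distrib right_diff_distrib scA_mult_left[symmetric] scA_mult_right[symmetric]
      scA_uminus scA_add scA_diff mult.assoc algebra_simps)

lemma norm_rot [simp]: "norm (rot c) = norm c"
  using norm_star_mult_self[of "rot c"] norm_star_mult_self[of c]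
  by (simp add: star_rot_mult power2_eq_iff_nonneg)

lemma norm_rot_inv [simp]: "norm (rot_inv c) = norm c"
  using norm_star_mult_self[of "rot_inv c"] norm_star_mult_self[of c]
  by (simp add: star_rot_inv_mult power2_eq_iff_nonneg)

lemma norm_funpow_rot [simp]: "norm ((rot ^^ j) c) = norm c"
  by (induction j) auto

lemma norm_funpow_rot_inv [simp]: "norm ((rot_inv ^^ j) c) = norm c"
  by (induction j) auto

end

fun chebyshev :: "nat \<Rightarrow> real poly" where
  "chebyshev 0 = 1"
| "chebyshev (Suc 0) = [:0, 1:]"
| "chebyshev (Suc (Suc n)) = [:0, 2:] * chebyshev (Suc n) - chebyshev n"

context small_selfadjoint
begin

text \<open>\<open>T\<^sub>j(k) = (u\<^sup>j + u\<^sup>*\<^sup>j)/2\<close>, as \<open>T\<^sub>j(cos \<theta>) = cos (j \<theta>)\<close>.\<close>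

lemma poly_lmult_chebyshev: "2 *\<^sub>R poly_lmult k (chebyshev j) c = (rot ^^ j) c + (rot_inv ^^ j) c"
proof (induction j rule: chebyshev.induct)
  case 1
  then show ?case
    by (simp add: scaleR_2)
next
  case 2
  then show ?case
    using rot_add_rot_inv[of c] by (simp add: poly_lmult_pCons)
next
  case (3 n)
  have rot: "(rot ^^ Suc (Suc n)) c = 2 *\<^sub>R (k * (rot ^^ Suc n) c) - (rot ^^ n) c"
    using rot_add_rot_inv[of "(rot ^^ Suc n) c"] by (simp add: algebra_simps)
  have rot_inv: "(rot_inv ^^ Suc (Suc n)) c = 2 *\<^sub>R (k * (rot_inv ^^ Suc n) c) - (rot_inv ^^ n) c"
    using rot_add_rot_inv[of "(rot_inv ^^ Suc n) c"] by (simp add: algebra_simps)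
  have "2 *\<^sub>R poly_lmult k (chebyshev (Suc (Suc n))) c
      = 2 *\<^sub>R (k * (2 *\<^sub>R poly_lmult k (chebyshev (Suc n)) c)) - 2 *\<^sub>R poly_lmult k (chebyshev n) c"
    by (simp add: poly_lmult_diff poly_lmult_pCons poly_lmult_smult scaleR_diff_right)
  then show ?case
    unfolding rot rot_inv 3 by (simp add: distrib_left scaleR_add_right algebra_simps)
qed

lemma norm_poly_lmult_chebyshev_le: "norm (poly_lmult k (chebyshev j) c) \<le> norm c"
proof -
  have "2 * norm (poly_lmult k (chebyshev j) c) = norm ((rot ^^ j) c + (rot_inv ^^ j) c)"
    by (simp flip: poly_lmult_chebyshev)
  also have "\<dots> \<le> 2 * norm c"
    using norm_triangle_ineq[of "(rot ^^ j) c" "(rot_inv ^^ j) c"] by simp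
  finally show ?thesis
    by simp
qed

end

lemma degree_chebyshev_le: "degree (chebyshev n) \<le> n"
  and coeff_chebyshev_degree: "coeff (chebyshev n) n = (if n = 0 then 1 else 2 ^ (n - 1))"
proof (induction n rule: chebyshev.induct)
  case (3 n)
  { case 1
    have "degree ([:0, 2:] * chebyshev (Suc n)) \<le> Suc (Suc n)"
      using "3.IH"(1) degree_mult_le[of "[:0, 2:]" "chebyshev (Suc n)"] by simp
    moreover have "degree (chebyshev n) \<le> Suc (Suc n)"
      using "3.IH"(3) by simp
    ultimately show ?case
      by (simp add: degree_diff_le) }
  { case 2
    have "coeff (chebyshev n) (Suc (Suc n)) = 0"
      using "3.IH"(3) by (simp add: coeff_eq_0)
    then show ?case
      using "3.IH"(2) by simp }
qed simp_all

lemma chebyshev_expansion: "degree q \<le> m \<Longrightarrow> \<exists>c. q = (\<Sum>j\<le>m. smult (c j) (chebyshev j))"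
proof (induction m arbitrary: q)
  case 0
  then have "q = [:coeff q 0:]"
    by (metis degree_0_id le_zero_eq)
  then have "q = smult (coeff q 0) (chebyshev 0)"
    by simp
  then show ?case
    by auto
next
  case (Suc m)
  define a where "a = coeff q (Suc m) / coeff (chebyshev (Suc m)) (Suc m)"
  define r where "r = q - smult a (chebyshev (Suc m))"
  have "degree (smult a (chebyshev (Suc m))) \<le> Suc m"
    using degree_chebyshev_le[of "Suc m"] degree_smult_le order_trans by blast
  then have "degree r \<le> Suc m"
    unfolding r_def using Suc.prems degree_diff_le by blast
  moreover have "coeff r (Suc m) = 0"
    by (simp add: r_def a_def coeff_chebyshev_degree)
  ultimately have "degree r \<le> m"
    by (metis le_SucE leading_coeff_0_iff degree_0 le0)
  then obtain c where "r = (\<Sum>j\<le>m. smult (c j) (chebyshev j))"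
    using Suc.IH by blast
  then have "q = (\<Sum>j\<le>Suc m. smult ((c(Suc m := a)) j) (chebyshev j))"
    by (simp add: r_def)
  then show ?case
    by blast
qed

lemma poly_chebyshev_Re: "norm w = 1 \<Longrightarrow> poly (chebyshev j) (Re w) = Re (w ^ j)"
proof (induction j rule: chebyshev.induct)
  case (3 n)
  define z where "z = w ^ Suc n"
  have "cnj w * w = 1"
    using "3.prems" complex_norm_square[of w] by (simp add: mult.commute)
  then have prev: "w ^ n = cnj w * z"
    by (simp add: z_def mult.assoc[symmetric])
  have succ: "w ^ Suc (Suc n) = w * z"
    by (simp add: z_def)
  have "Re (w * z) + Re (cnj w * z) = 2 * Re w * Re z"
    by simp
  then have "Re (w ^ Suc (Suc n)) = 2 * Re w * Re z - Re (w ^ n)"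
    unfolding prev succ by simp
  moreover have "poly (chebyshev (Suc (Suc n))) (Re w)
      = 2 * Re w * poly (chebyshev (Suc n)) (Re w) - poly (chebyshev n) (Re w)"
    by simp
  ultimately show ?case
    using 3 by (simp only: z_def)
qed simp_all

lemma norm_coeff_le_of_norm_poly_le_on_circle:
  fixes P :: "complex poly"
  assumes "\<And>w. norm w = 1 \<Longrightarrow> norm (poly P w) \<le> M"
  shows "norm (coeff P n) \<le> M"
proof -
  have "deriv (poly p) = poly (pderiv p)" for p :: "complex poly"
    by (rule ext, rule DERIV_imp_deriv, rule poly_DERIV)
  then have "(deriv ^^ n) (poly P) = poly ((pderiv ^^ n) P)"
    by (induction n) auto
  then have "(deriv ^^ n) (poly P) 0 = fact n * coeff P n"
    by (simp add: poly_0_coeff_0 coeff_higher_pderiv pochhammer_fact)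
  moreover have "norm ((deriv ^^ n) (poly P) 0) \<le> fact n * M / 1 ^ n"
    by (rule Cauchy_inequality) (auto intro!: holomorphic_intros continuous_intros simp: assms)
  ultimately show ?thesis
    by (simp add: norm_mult)
qed

text \<open>\<open>w\<^sup>m q((w + w\<^sup>-\<^sup>1)/2)\<close> as a polynomial in \<open>w\<close>, for \<open>q = \<Sum>\<^sub>l c\<^sub>l T\<^sub>l\<close>; on the unit circle
  \<open>(w + w\<^sup>-\<^sup>1)/2 = Re w\<close>.\<close>

lemma poly_chebyshev_lift:
  assumes w: "norm w = 1"
  shows "poly (\<Sum>l\<le>m. smult (of_real (c l) / 2) (monom 1 (m + l) + monom 1 (m - l))) w
    = w ^ m * of_real (poly (\<Sum>l\<le>m. smult (c l) (chebyshev l)) (Re w))"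
proof -
  have "w ^ l * cnj w ^ l = 1" for l
    using w complex_norm_square[of w] by (simp flip: power_mult_distrib)
  then have "w ^ (m - l) = w ^ m * cnj w ^ l" if "l \<le> m" for l
    using that by (metis le_add_diff_inverse2 mult.assoc mult_1_right power_add)
  then have "poly (\<Sum>l\<le>m. smult (of_real (c l) / 2) (monom 1 (m + l) + monom 1 (m - l))) w
      = (\<Sum>l\<le>m. w ^ m * (of_real (c l) * ((w ^ l + cnj w ^ l) / 2)))"
    unfolding poly_sum by (intro sum.cong refl) (simp add: poly_monom power_add algebra_simps)
  also have "\<dots> = w ^ m * (\<Sum>l\<le>m. of_real (c l) * ((w ^ l + cnj w ^ l) / 2))"
    by (simp add: sum_distrib_left)
  also have "\<dots> = w ^ m * of_real (poly (\<Sum>l\<le>m. smult (c l) (chebyshev l)) (Re w))"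
  proof -
    have "(w ^ l + cnj w ^ l) / 2 = of_real (Re (w ^ l))" for l
      using complex_add_cnj[of "w ^ l"] by simp
    then show ?thesis
      using w by (simp add: poly_sum poly_chebyshev_Re)
  qed
  finally show ?thesis .
qed

lemma abs_chebyshev_coeff_le:
  assumes q: "q = (\<Sum>j\<le>m. smult (c j) (chebyshev j))"
    and M: "\<And>t. \<bar>t\<bar> \<le> 1 \<Longrightarrow> \<bar>poly q t\<bar> \<le> M"
    and j: "j \<le> m"
  shows "\<bar>c j\<bar> \<le> 2 * M"
proof -
  define P :: "complex poly" where
    "P = (\<Sum>l\<le>m. smult (of_real (c l) / 2) (monom 1 (m + l) + monom 1 (m - l)))"
  have "norm (poly P w) \<le> M" if "norm w = 1" for w
    using that M[of "Re w"] abs_Re_le_cmod[of w]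
    by (simp add: P_def q poly_chebyshev_lift norm_mult norm_power)
  then have "norm (coeff P (m + j)) \<le> M"
    by (rule norm_coeff_le_of_norm_poly_le_on_circle)
  moreover have "coeff P (m + j) = of_real (c j) / 2 + (if j = 0 then of_real (c 0) / 2 else 0)"
  proof -
    have "coeff P (m + j) = (\<Sum>l\<le>m. (if l = j then of_real (c l) / 2 else 0)
        + (if l = 0 \<and> j = 0 then of_real (c l) / 2 else 0))"
      unfolding P_def coeff_sum by (intro sum.cong refl) (auto simp: coeff_monom)
    then show ?thesis
      using j by (cases "j = 0") (simp_all add: sum.distrib flip: sum_distrib_left)
  qed
  moreover have "0 \<le> M"
    using M[of 0] by simp
  ultimately show ?thesis
    by (auto split: if_splits simp: norm_divide)
qed

lemma le_of_pow2_bound: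
  fixes x y C :: real
  assumes "0 \<le> y" and bound: "\<And>n. x ^ 2 ^ n \<le> C * 2 ^ n * y ^ 2 ^ n"
  shows "x \<le> y"
proof (rule ccontr)
  assume "\<not> x \<le> y"
  then have "y < x" by simp
  show False
  proof (cases "y = 0")
    case True
    then show False
      using bound[of 0] \<open>y < x\<close> by simp
  next
    case False
    define \<rho> where "\<rho> = x / y"
    have "y > 0" "\<rho> > 1"
      using False \<open>0 \<le> y\<close> \<open>y < x\<close> by (auto simp: \<rho>_def)
    have C: "\<rho> ^ 2 ^ n \<le> C * 2 ^ n" for n
      using bound[of n] \<open>y > 0\<close> by (simp add: \<rho>_def power_divide divide_le_eq)
    obtain n where n: "2 * C < (\<rho> - 1)\<^sup>2 * 2 ^ n"
      using real_arch_pow[of 2 "2 * C / (\<rho> - 1)\<^sup>2"] \<open>\<rho> > 1\<close> by (auto simp: field_simps)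
    text \<open>Bernoulli's inequality gives \<open>\<rho>\<^bsup>2\<^sup>n\<^esup> \<ge> 2\<^sup>n (\<rho> - 1)\<close>; squaring beats \<open>C 2\<^bsup>n+1\<^esup>\<close>.\<close>
    have "2 ^ n * (\<rho> - 1) \<le> \<rho> ^ 2 ^ n"
      using Bernoulli_inequality[of "\<rho> - 1" "2 ^ n"] \<open>\<rho> > 1\<close> by simp
    then have "(2 ^ n * (\<rho> - 1))\<^sup>2 \<le> (\<rho> ^ 2 ^ n)\<^sup>2"
      using \<open>\<rho> > 1\<close> by (intro power_mono) auto
    also have "\<dots> = \<rho> ^ 2 ^ Suc n"
      by (simp add: power_mult[symmetric] mult.commute)
    finally have "(2 ^ n * (\<rho> - 1))\<^sup>2 \<le> \<rho> ^ 2 ^ Suc n" .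
    moreover have "C * 2 ^ Suc n < (2 ^ n * (\<rho> - 1))\<^sup>2"
    proof -
      have "C * 2 ^ Suc n = 2 ^ n * (2 * C)"
        by simp
      also have "\<dots> < 2 ^ n * ((\<rho> - 1)\<^sup>2 * 2 ^ n)"
        using n by simp
      also have "\<dots> = (2 ^ n * (\<rho> - 1))\<^sup>2"
        by (simp only: power_mult_distrib power2_eq_square mult_ac)
      finally show ?thesis .
    qed
    ultimately show False
      using C[of "Suc n"] by simp
  qed
qed

context small_selfadjoint
begin

lemma norm_poly_lmult_le_degree:
  assumes "degree q \<le> m" and M: "\<And>t. \<bar>t\<bar> \<le> 1 \<Longrightarrow> \<bar>poly q t\<bar> \<le> M"
  shows "norm (poly_lmult k q c) \<le> 2 * real (Suc m) * M * norm c"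
proof -
  obtain a where q: "q = (\<Sum>j\<le>m. smult (a j) (chebyshev j))"
    using chebyshev_expansion[OF assms(1)] by blast
  have "norm (poly_lmult k q c) \<le> (\<Sum>j\<le>m. norm (a j *\<^sub>R poly_lmult k (chebyshev j) c))"
    unfolding q poly_lmult_sum poly_lmult_smult by (rule norm_sum)
  also have "\<dots> \<le> (\<Sum>j\<le>m. 2 * M * norm c)"
  proof (rule sum_mono)
    fix j
    assume "j \<in> {..m}"
    then have "\<bar>a j\<bar> \<le> 2 * M"
      using abs_chebyshev_coeff_le[OF q M] by auto
    then show "norm (a j *\<^sub>R poly_lmult k (chebyshev j) c) \<le> 2 * M * norm c"
      using norm_poly_lmult_chebyshev_le[of j c] by (simp add: mult_mono')
  qed
  finally show ?thesis
    by (simp add: algebra_simps)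
qed

lemma norm_poly_lmult_self_le_degree:
  assumes "degree p \<le> m" and M: "\<And>t. \<bar>t\<bar> \<le> 1 \<Longrightarrow> \<bar>t * poly p t\<bar> \<le> M"
  shows "norm (poly_lmult k p k) \<le> 2 * (real m + 2) * M"
proof -
  let ?a = "poly_lmult k p k"
  have "0 \<le> M"
    using M[of 0] by simp
  have "degree (pCons 0 p) \<le> Suc m"
    using assms(1) degree_pCons_le[of 0 p] by linarith
  have "(norm ?a)\<^sup>2 = norm (poly_lmult k (pCons 0 p) (star ?a))"
    by (simp add: poly_lmult_pCons_0 norm_mult_star_self)
  also have "\<dots> \<le> 2 * (real m + 2) * M * norm ?a"
    using norm_poly_lmult_le_degree[OF \<open>degree (pCons 0 p) \<le> Suc m\<close>, of M "star ?a"] M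
    by (simp add: algebra_simps)
  finally show ?thesis
    using \<open>0 \<le> M\<close> by (cases "?a = 0") (auto simp: power2_eq_square)
qed

end

fun pow2_iter :: "real poly \<Rightarrow> nat \<Rightarrow> real poly" where
  "pow2_iter p 0 = p"
| "pow2_iter p (Suc n) = pCons 0 (pow2_iter p n) * pow2_iter p n"

lemma pCons_0_pow2_iter: "pCons 0 (pow2_iter p n) = pCons 0 p ^ 2 ^ n"
proof (induction n)
  case (Suc n)
  have "pCons 0 (pow2_iter p (Suc n)) = pCons 0 (pow2_iter p n) * pCons 0 (pow2_iter p n)"
    by simp
  then show ?case
    using Suc by (simp add: power_mult[symmetric] power2_eq_square[symmetric] mult.commute)
qed simp

lemma degree_pow2_iter_le: "degree (pow2_iter p n) \<le> 2 ^ n * degree (pCons 0 p)"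
proof -
  have "degree (pow2_iter p n) \<le> degree (pCons 0 p ^ 2 ^ n)"
    unfolding pCons_0_pow2_iter[symmetric] by (simp add: degree_pCons_eq_if)
  also have "\<dots> \<le> 2 ^ n * degree (pCons 0 p)"
    by (metis degree_power_le mult.commute)
  finally show ?thesis .
qed

lemma poly_pow2_iter: "t * poly (pow2_iter p n) t = (t * poly p t) ^ 2 ^ n"
  using arg_cong[OF pCons_0_pow2_iter[of p n], of "\<lambda>q. poly q t"] by simp

context small_selfadjoint
begin

lemma norm_poly_lmult_pow2_iter: "norm (poly_lmult k (pow2_iter p n) k) = norm (poly_lmult k p k) ^ 2 ^ n"
proof (induction n)
  case (Suc n)
  let ?a = "poly_lmult k (pow2_iter p n) k"
  have "poly_lmult k (pow2_iter p (Suc n)) k = ?a * ?a"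
    by (simp only: pow2_iter.simps poly_lmult_mult poly_lmult_pCons_0)
  also have "\<dots> = star ?a * ?a"
    by (simp add: star_poly_lmult_self[OF star_k])
  finally have "poly_lmult k (pow2_iter p (Suc n)) k = star ?a * ?a" .
  then show ?case
    using Suc by (simp add: norm_star_mult_self power_mult[symmetric] mult.commute)
qed simp

text \<open>The spectral bound \<open>\<parallel>(t p)(k)\<parallel> \<le> sup\<^bsub>[-1,1]\<^esub> |t p(t)|\<close>; the factor linear in the degree
  disappears when \<open>t p\<close> is replaced by its \<open>2\<^sup>n\<close>-th powers.\<close>

lemma norm_poly_lmult_self_le:
  assumes M: "\<And>t. \<bar>t\<bar> \<le> 1 \<Longrightarrow> \<bar>t * poly p t\<bar> \<le> M"
  shows "norm (poly_lmult k p k) \<le> M"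
proof -
  define D where "D = degree (pCons 0 p)"
  have "0 \<le> M"
    using M[of 0] by simp
  have "norm (poly_lmult k p k) ^ 2 ^ n \<le> 2 * (real D + 2) * 2 ^ n * M ^ 2 ^ n" for n
  proof -
    have "norm (poly_lmult k (pow2_iter p n) k) \<le> 2 * (real (2 ^ n * D) + 2) * M ^ 2 ^ n"
      using degree_pow2_iter_le[of p n] M
      by (intro norm_poly_lmult_self_le_degree) (auto simp: D_def poly_pow2_iter power_abs power_mono)
    also have "\<dots> \<le> 2 * (real D + 2) * 2 ^ n * M ^ 2 ^ n"
      using \<open>0 \<le> M\<close> one_le_power[of "2::real" n]
      by (intro mult_right_mono) (auto simp: algebra_simps)
    finally show ?thesis
      by (simp add: norm_poly_lmult_pow2_iter)
  qed
  then show ?thesis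
    using \<open>0 \<le> M\<close> by (rule le_of_pow2_bound[rotated])
qed

end

subsection \<open>A partial inverse of a self-adjoint element\<close>

lemma real_polynomial_function_imp_poly:
  fixes f :: "real \<Rightarrow> real"
  shows "real_polynomial_function f \<Longrightarrow> \<exists>p. f = poly p"
proof (induction rule: real_polynomial_function.induct)
  case (linear f)
  have "f x = poly [:0, f 1:] x" for x
    using linear_scale_real[OF bounded_linear.linear[OF linear], of x 1] by (simp add: mult.commute)
  then have "f = poly [:0, f 1:]"
    by (rule ext)
  then show ?case ..
next
  case (const c)
  have "(\<lambda>x. c) = poly [:c:]"
    by auto
  then show ?case ..
next
  case (add f g)
  then obtain p q where "f = poly p" "g = poly q"
    by blast
  then have "(\<lambda>x. f x + g x) = poly (p + q)"
    by auto
  then show ?case ..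
next
  case (mult f g)
  then obtain p q where "f = poly p" "g = poly q"
    by blast
  then have "(\<lambda>x. f x * g x) = poly (p * q)"
    by auto
  then show ?case ..
qed

lemma poly_approximation_vanishing_at_0:
  fixes f :: "real \<Rightarrow> real"
  assumes "continuous_on {-1..1} f" "f 0 = 0" "0 < e"
  obtains p where "\<And>t. \<bar>t\<bar> \<le> 1 \<Longrightarrow> \<bar>f t - t * poly p t\<bar> \<le> e"
proof -
  obtain g where g: "polynomial_function g" "\<And>t. t \<in> {-1..1} \<Longrightarrow> \<bar>f t - g t\<bar> < e / 2"
    using Stone_Weierstrass_polynomial_function[OF compact_Icc assms(1), of "e / 2"] assms(3) by auto
  obtain q where q: "g = poly q"
    using g(1) real_polynomial_function_eq real_polynomial_function_imp_poly by blast
  obtain a p where ap: "q - [:poly q 0:] = pCons a p"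
    by (cases "q - [:poly q 0:]") auto
  have "a = 0"
    using arg_cong[OF ap, of "\<lambda>r. coeff r 0"] by (simp add: poly_0_coeff_0)
  then have p: "t * poly p t = poly q t - poly q 0" for t
    using arg_cong[OF ap, of "\<lambda>r. poly r t"] by simp
  have "\<bar>f t - t * poly p t\<bar> \<le> e" if "\<bar>t\<bar> \<le> 1" for t
  proof -
    have "\<bar>f t - poly q t\<bar> < e / 2" "\<bar>poly q 0\<bar> < e / 2"
      using g(2)[of t] g(2)[of 0] that q assms(2) by (auto simp: abs_le_iff)
    moreover have "\<bar>f t - t * poly p t\<bar> \<le> \<bar>f t - poly q t\<bar> + \<bar>poly q 0\<bar>"
      using abs_triangle_ineq[of "f t - poly q t" "poly q 0"] by (simp add: p)
    ultimately show ?thesis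
      by linarith
  qed
  then show ?thesis
    using that by blast
qed

text \<open>\<open>cutoff\<close> vanishes on \<open>[-1/8, 1/8]\<close> and is \<open>1\<close> outside \<open>(-1/4, 1/4)\<close>; \<open>trunc_inverse t = 1/t\<close>
  for \<open>|t| \<ge> 1/8\<close>.\<close>

definition cutoff :: "real \<Rightarrow> real" where
  "cutoff t = min 1 (max 0 (8 * \<bar>t\<bar> - 1))"

definition trunc_inverse :: "real \<Rightarrow> real" where
  "trunc_inverse t = t / max (t\<^sup>2) (1/64)"

lemma continuous_on_cutoff: "continuous_on S cutoff"
  unfolding cutoff_def by (intro continuous_intros)

lemma continuous_on_trunc_inverse: "continuous_on S trunc_inverse"
  unfolding trunc_inverse_def by (intro continuous_intros) (auto simp: max_def)

lemma cutoff_0 [simp]: "cutoff 0 = 0"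
  by (simp add: cutoff_def)

lemma trunc_inverse_0 [simp]: "trunc_inverse 0 = 0"
  by (simp add: trunc_inverse_def)

lemma cutoff_bounds: "0 \<le> cutoff t" "cutoff t \<le> 1"
  by (auto simp: cutoff_def)

lemma trunc_inverse_mult_cutoff: "trunc_inverse t * t * cutoff t = cutoff t"
proof (cases "\<bar>t\<bar> \<le> 1/8")
  case False
  then have "(1/8)\<^sup>2 < \<bar>t\<bar>\<^sup>2"
    by (intro power_strict_mono) auto
  then have "1/64 < t\<^sup>2"
    by (simp add: power2_eq_square)
  then show ?thesis
    by (simp add: trunc_inverse_def max_def power2_eq_square)
qed (simp add: cutoff_def)

lemma abs_trunc_inverse_le: "\<bar>trunc_inverse t\<bar> \<le> 8"
proof (cases "\<bar>t\<bar> < 1/8")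
  case True
  then have "\<bar>t\<bar>\<^sup>2 < (1/8)\<^sup>2"
    by (intro power_strict_mono) auto
  then have "t\<^sup>2 < 1/64"
    by (simp add: power2_eq_square)
  then show ?thesis
    using True by (simp add: trunc_inverse_def max_def abs_divide)
next
  case False
  then have "(1/8)\<^sup>2 \<le> \<bar>t\<bar>\<^sup>2"
    by (intro power_mono) auto
  then have "1/64 \<le> t\<^sup>2"
    by (simp add: power2_eq_square)
  have "\<bar>t\<bar> * 1 \<le> \<bar>t\<bar> * (8 * \<bar>t\<bar>)"
    using False by (intro mult_left_mono) auto
  then have "\<bar>t\<bar> \<le> 8 * t\<^sup>2"
    by (simp add: power2_eq_square abs_mult_self_eq mult.left_commute)
  then show ?thesis
    using \<open>1/64 \<le> t\<^sup>2\<close> by (simp add: trunc_inverse_def max_def abs_divide divide_le_eq)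
qed

lemma abs_mult_one_minus_cutoff_le: "\<bar>t * (1 - cutoff t)\<bar> \<le> 1/4"
proof (cases "\<bar>t\<bar> < 1/4")
  case True
  then have "\<bar>t\<bar> * \<bar>1 - cutoff t\<bar> \<le> 1/4 * 1"
    using cutoff_bounds[of t] by (intro mult_mono) auto
  then show ?thesis
    by (simp add: abs_mult)
qed (simp add: cutoff_def)

lemma abs_approx_inverse_mult_le:
  fixes t G F G' F' e :: real
  assumes "\<bar>t\<bar> \<le> 1" "\<bar>G\<bar> \<le> 8" "\<bar>F\<bar> \<le> 1" "G * t * F = F"
    and "\<bar>G' - G\<bar> \<le> e" "\<bar>F' - F\<bar> \<le> e" "e \<le> 1"
  shows "\<bar>t * (G' * F') - F'\<bar> \<le> 11 * e"
proof -
  have "\<bar>F'\<bar> \<le> 2"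
    using assms(3,6,7) by linarith
  have "t * (G' * F') - F' = t * F' * (G' - G) + t * G * (F' - F) - (F' - F)"
    using assms(4) by (simp add: algebra_simps)
  also have "\<bar>\<dots>\<bar> \<le> \<bar>t\<bar> * \<bar>F'\<bar> * \<bar>G' - G\<bar> + \<bar>t\<bar> * \<bar>G\<bar> * \<bar>F' - F\<bar> + \<bar>F' - F\<bar>"
    using abs_triangle_ineq4[of "t * F' * (G' - G) + t * G * (F' - F)" "F' - F"]
      abs_triangle_ineq[of "t * F' * (G' - G)" "t * G * (F' - F)"]
    by (simp add: abs_mult)
  also have "\<dots> \<le> 1 * 2 * e + 1 * 8 * e + e"
    using assms \<open>\<bar>F'\<bar> \<le> 2\<close> by (intro add_mono mult_mono) auto
  finally show ?thesis
    by simp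
qed

lemma Cauchy_of_norm_diff_le_inverse:
  fixes X :: "nat \<Rightarrow> 'a::real_normed_vector"
  assumes dist: "\<And>m n. norm (X m - X n) \<le> inverse (real (Suc m)) + inverse (real (Suc n))"
  shows "Cauchy X"
proof (rule CauchyI)
  fix \<epsilon> :: real
  assume "0 < \<epsilon>"
  then obtain M where M: "inverse (real (Suc M)) < \<epsilon> / 2"
    using reals_Archimedean[of "\<epsilon> / 2"] by auto
  have "norm (X m - X n) < \<epsilon>" if "M \<le> m" "M \<le> n" for m n
  proof -
    have "inverse (real (Suc m)) \<le> inverse (real (Suc M))" "inverse (real (Suc n)) \<le> inverse (real (Suc M))"
      using that by (auto intro!: le_imp_inverse_le)
    then show ?thesis
      using dist[of m n] M by linarith
  qed
  then show "\<exists>M. \<forall>m\<ge>M. \<forall>n\<ge>M. norm (X m - X n) < \<epsilon>"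
    by blast
qed

definition approximates :: "(real \<Rightarrow> real) \<Rightarrow> (nat \<Rightarrow> real poly) \<Rightarrow> bool" where
  "approximates f p \<longleftrightarrow>
    (\<forall>n t. \<bar>t\<bar> \<le> 1 \<longrightarrow> \<bar>f t - t * poly (p n) t\<bar> \<le> inverse (real (Suc n)))"

lemma approximatesD:
  "approximates f p \<Longrightarrow> \<bar>t\<bar> \<le> 1 \<Longrightarrow> \<bar>f t - t * poly (p n) t\<bar> \<le> inverse (real (Suc n))"
  by (simp add: approximates_def)

lemma exists_approximates:
  assumes "continuous_on {-1..1} f" "f 0 = 0"
  obtains p where "approximates f p"
proof -
  have "\<exists>p. \<forall>t. \<bar>t\<bar> \<le> 1 \<longrightarrow> \<bar>f t - t * poly p t\<bar> \<le> inverse (real (Suc n))" for n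
    using poly_approximation_vanishing_at_0[OF assms, of "inverse (real (Suc n))"] by auto
  then show ?thesis
    using that unfolding approximates_def by metis
qed

context small_selfadjoint
begin

lemma convergent_poly_lmult_self:
  assumes p: "approximates f p"
  shows "convergent (\<lambda>n. poly_lmult k (p n) k)"
proof -
  have "norm (poly_lmult k (p m) k - poly_lmult k (p n) k) \<le> inverse (real (Suc m)) + inverse (real (Suc n))"
    for m n
    unfolding poly_lmult_diff[symmetric]
  proof (rule norm_poly_lmult_self_le)
    fix t :: real
    assume "\<bar>t\<bar> \<le> 1"
    then show "\<bar>t * poly (p m - p n) t\<bar> \<le> inverse (real (Suc m)) + inverse (real (Suc n))"
      using approximatesD[OF p, of t m] approximatesD[OF p, of t n] by (simp add: algebra_simps abs_le_iff)
  qed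
  then have "Cauchy (\<lambda>n. poly_lmult k (p n) k)"
    by (rule Cauchy_of_norm_diff_le_inverse)
  then show ?thesis
    by (simp add: Cauchy_convergent_iff)
qed

lemma norm_partial_inverse_defect_le:
  assumes p: "approximates cutoff p" and q: "approximates trunc_inverse q"
  shows "norm (poly_lmult k (q n) k * (k * poly_lmult k (p n) k) - poly_lmult k (p n) k)
    \<le> 11 * inverse (real (Suc n))"
proof -
  let ?r = "pCons 0 (q n) * pCons 0 (p n) - p n"
  have "poly_lmult k (pCons 0 (q n) * pCons 0 (p n)) k
      = poly_lmult k (q n) k * poly_lmult k (pCons 0 (p n)) k"
    by (simp only: poly_lmult_mult poly_lmult_pCons_0)
  also have "poly_lmult k (pCons 0 (p n)) k = k * poly_lmult k (p n) k"
    by (simp add: poly_lmult_pCons)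
  finally have "poly_lmult k (q n) k * (k * poly_lmult k (p n) k) - poly_lmult k (p n) k
      = poly_lmult k ?r k"
    by (simp add: poly_lmult_diff)
  also have "norm \<dots> \<le> 11 * inverse (real (Suc n))"
  proof (rule norm_poly_lmult_self_le)
    fix t :: real
    assume t: "\<bar>t\<bar> \<le> 1"
    have "\<bar>t * poly (q n) t - trunc_inverse t\<bar> \<le> inverse (real (Suc n))"
      "\<bar>t * poly (p n) t - cutoff t\<bar> \<le> inverse (real (Suc n))"
      using approximatesD[OF p t, of n] approximatesD[OF q t, of n] by (simp_all add: abs_minus_commute)
    moreover have "\<bar>cutoff t\<bar> \<le> 1" "inverse (real (Suc n)) \<le> 1"
      using cutoff_bounds[of t] by (auto simp: inverse_le_1_iff)
    ultimately have "\<bar>t * ((t * poly (q n) t) * (t * poly (p n) t)) - t * poly (p n) t\<bar>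
        \<le> 11 * inverse (real (Suc n))"
      using t abs_trunc_inverse_le trunc_inverse_mult_cutoff by (intro abs_approx_inverse_mult_le)
    then show "\<bar>t * poly ?r t\<bar> \<le> 11 * inverse (real (Suc n))"
      by (simp add: algebra_simps)
  qed
  finally show ?thesis .
qed

lemma norm_diff_lmult_cutoff_approx_le:
  assumes p: "approximates cutoff p"
  shows "norm (k - k * poly_lmult k (p n) k) \<le> 1/4 + inverse (real (Suc n))"
proof -
  have "k - k * poly_lmult k (p n) k = poly_lmult k (1 - pCons 0 (p n)) k"
    by (simp add: poly_lmult_diff poly_lmult_pCons)
  also have "norm \<dots> \<le> 1/4 + inverse (real (Suc n))"
  proof (rule norm_poly_lmult_self_le)
    fix t :: real
    assume t: "\<bar>t\<bar> \<le> 1"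
    have "t * poly (1 - pCons 0 (p n)) t = t * (1 - cutoff t) + t * (cutoff t - t * poly (p n) t)"
      by (simp add: algebra_simps)
    moreover have "\<bar>t\<bar> * \<bar>cutoff t - t * poly (p n) t\<bar> \<le> 1 * inverse (real (Suc n))"
      using t approximatesD[OF p t, of n] by (intro mult_mono) auto
    ultimately show "\<bar>t * poly (1 - pCons 0 (p n)) t\<bar> \<le> 1/4 + inverse (real (Suc n))"
      using abs_mult_one_minus_cutoff_le[of t]
        abs_triangle_ineq[of "t * (1 - cutoff t)" "t * (cutoff t - t * poly (p n) t)"]
      by (simp add: abs_mult)
  qed
  finally show ?thesis .
qed

text \<open>In the limit, \<open>e = cutoff(k)\<close> and \<open>g = trunc_inverse(k)\<close>.\<close>

lemma exists_partial_inverse: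
  assumes "norm k = 1/2"
  shows "\<exists>e g. e \<noteq> 0 \<and> g * (k * e) = e"
proof -
  obtain p where p: "approximates cutoff p"
    using exists_approximates[OF continuous_on_cutoff cutoff_0] .
  obtain q where q: "approximates trunc_inverse q"
    using exists_approximates[OF continuous_on_trunc_inverse trunc_inverse_0] .
  obtain e g where e: "(\<lambda>n. poly_lmult k (p n) k) \<longlonglongrightarrow> e" and g: "(\<lambda>n. poly_lmult k (q n) k) \<longlonglongrightarrow> g"
    using convergent_poly_lmult_self[OF p] convergent_poly_lmult_self[OF q] by (auto simp: convergent_def)
  have "(\<lambda>n. poly_lmult k (q n) k * (k * poly_lmult k (p n) k) - poly_lmult k (p n) k) \<longlonglongrightarrow> 0"
  proof (rule Lim_null_comparison)
    show "\<forall>\<^sub>F n in sequentially.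
        norm (poly_lmult k (q n) k * (k * poly_lmult k (p n) k) - poly_lmult k (p n) k)
          \<le> 11 * inverse (real (Suc n))"
      using norm_partial_inverse_defect_le[OF p q] by (intro always_eventually allI)
    show "(\<lambda>n. 11 * inverse (real (Suc n))) \<longlonglongrightarrow> 0"
      using tendsto_mult_right_zero[OF LIMSEQ_inverse_real_of_nat, of 11] by simp
  qed
  moreover have "(\<lambda>n. poly_lmult k (q n) k * (k * poly_lmult k (p n) k) - poly_lmult k (p n) k)
      \<longlonglongrightarrow> g * (k * e) - e"
    by (intro tendsto_intros e g)
  ultimately have "g * (k * e) = e"
    using LIMSEQ_unique by fastforce
  have "(\<lambda>n. norm (k - k * poly_lmult k (p n) k)) \<longlonglongrightarrow> norm (k - k * e)"
    by (intro tendsto_intros e)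
  moreover have "(\<lambda>n. 1/4 + inverse (real (Suc n))) \<longlonglongrightarrow> 1/4 + 0"
    by (intro tendsto_intros LIMSEQ_inverse_real_of_nat)
  ultimately have "norm (k - k * e) \<le> 1/4 + 0"
    by (rule LIMSEQ_le) (use norm_diff_lmult_cutoff_approx_le[OF p] in blast)
  then have "e \<noteq> 0"
    using assms by auto
  with \<open>g * (k * e) = e\<close> show ?thesis
    by blast
qed

end

lemma (in cstar) selfadjoint_partial_inverse:
  assumes "star h = h" "h \<noteq> 0"
  shows "\<exists>e g. e \<noteq> 0 \<and> g * (h * e) = e"
proof -
  define k where "k = (1 / (2 * norm h)) *\<^sub>R h"
  interpret small_selfadjoint scA star k
    using assms by unfold_locales (auto simp: k_def star_scaleR)
  obtain e g where "e \<noteq> 0" "g * (k * e) = e"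
    using exists_partial_inverse assms(2) by (auto simp: k_def)
  moreover have "g * (k * e) = ((1 / (2 * norm h)) *\<^sub>R g) * (h * e)"
    by (simp add: k_def)
  ultimately show ?thesis
    by metis
qed

subsection \<open>Hilbert modules\<close>

context
  fixes scA :: "complex \<Rightarrow> 'a::{real_normed_algebra,banach} \<Rightarrow> 'a"
    and star :: "'a \<Rightarrow> 'a"
    and scM :: "complex \<Rightarrow> 'm::banach \<Rightarrow> 'm"
    and act :: "'m \<Rightarrow> 'a \<Rightarrow> 'm"
    and ip :: "'m \<Rightarrow> 'm \<Rightarrow> 'a"
  assumes cstar_algebra: "cstar_algebra scA star"
    and hilbert_module: "hilbert_module scA star scM act ip"
begin

interpretation cstar scA star
  by unfold_locales (rule cstar_algebra)

lemma act_add_right: "act x (a + b) = act x a + act x b"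
  using hilbert_module unfolding hilbert_module_def by metis

lemma act_mult: "act x (a * b) = act (act x a) b"
  using hilbert_module unfolding hilbert_module_def by metis

lemma scM_act: "scM c (act x a) = act x (scA c a)"
  using hilbert_module unfolding hilbert_module_def by metis

lemma scM_of_real: "scM (complex_of_real r) x = r *\<^sub>R x"
  using hilbert_module unfolding hilbert_module_def by metis

lemma ip_act_right: "ip x (act y a) = ip x y * a"
  using hilbert_module unfolding hilbert_module_def by metis

lemma star_ip: "star (ip x y) = ip y x"
  using hilbert_module unfolding hilbert_module_def by metis

lemma ip_self_positive: "cstar_positive star (ip x x)"
  using hilbert_module unfolding hilbert_module_def by metis

lemma ip_self_eq_0D: "ip x x = 0 \<Longrightarrow> x = 0"
  using hilbert_module unfolding hilbert_module_def by metis

lemma norm_eq_sqrt_ip: "norm x = sqrt (norm (ip x x))"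
  using hilbert_module unfolding hilbert_module_def by metis

lemma act_0_right: "act x 0 = 0"
  using act_add_right[of x 0 0] by simp

lemma act_scaleR_right: "act x (r *\<^sub>R a) = r *\<^sub>R act x a"
  by (metis scA_of_real scM_act scM_of_real)

lemma norm_act_eq:
  assumes "ip x x = star b * b"
  shows "norm (act x a) = norm (b * a)"
proof -
  have "ip (act x a) (act x a) = star a * (ip x x * a)"
    by (metis ip_act_right star_ip star_mult)
  also have "\<dots> = star (b * a) * (b * a)"
    by (simp add: assms star_mult mult.assoc)
  finally show ?thesis
    by (simp add: norm_eq_sqrt_ip norm_star_mult_self)
qed

lemma bounded_linear_act: "bounded_linear (act x)"
proof -
  obtain b where b: "ip x x = star b * b"
    using ip_self_positive[of x] unfolding cstar_positive_def by blast
  show ?thesis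
  proof (rule bounded_linear_intro[where K = "norm b"])
    show "norm (act x a) \<le> norm a * norm b" for a
      using norm_mult_ineq[of b a] by (simp add: norm_act_eq[OF b] mult.commute)
  qed (simp_all add: act_add_right act_scaleR_right)
qed

lemma submodule_act_image:
  assumes "0 \<in> D" "\<And>v w. v \<in> D \<Longrightarrow> w \<in> D \<Longrightarrow> v + w \<in> D"
    and "\<And>c w. w \<in> D \<Longrightarrow> scA c w \<in> D" "\<And>w a. w \<in> D \<Longrightarrow> w * a \<in> D"
  shows "submodule scM act (act x ` D)"
  unfolding submodule_def
proof (intro conjI ballI allI)
  show "0 \<in> act x ` D"
    using assms(1) act_0_right[of x] by (metis image_eqI)
next
  fix y z
  assume "y \<in> act x ` D" "z \<in> act x ` D"
  then show "y + z \<in> act x ` D"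
    using assms(2) by (auto simp: act_add_right[symmetric])
next
  fix c y
  assume "y \<in> act x ` D"
  then show "scM c y \<in> act x ` D"
    using assms(3) by (auto simp: scM_act)
next
  fix y a
  assume "y \<in> act x ` D"
  then show "act y a \<in> act x ` D"
    using assms(4) by (auto simp: act_mult[symmetric])
qed

lemma closed_act_image:
  assumes "subspace D" "closed D" "0 < C" "\<And>w. w \<in> D \<Longrightarrow> norm w \<le> C * norm (act x w)"
  shows "closed (act x ` D)"
proof -
  have "\<forall>w\<in>D. norm (act x w) \<ge> inverse C * norm w"
    using assms(3,4) by (simp add: inverse_eq_divide divide_le_eq mult.commute)
  then have "complete (act x ` D)"
    using assms(1-3) by (intro complete_isometric_image bounded_linear_act complete_eq_closed[THEN iffD2])
      auto
  then show ?thesis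
    by (rule complete_imp_closed)
qed

text \<open>If \<open>g\<close> inverts \<open>\<langle>x,x\<rangle> = b\<^sup>* b\<close> on a right ideal \<open>D\<close>, then \<open>\<parallel>w\<parallel> \<le> \<parallel>g\<parallel> \<parallel>b\<parallel> \<parallel>x w\<parallel>\<close> on \<open>D\<close>,
  so \<open>x D\<close> is closed.\<close>

lemma closed_submodule_act_image:
  "closed_submodule scM act (act x ` {w. g * (ip x x * w) = w})"
proof -
  define D where "D = {w. g * (ip x x * w) = w}"
  obtain b where b: "ip x x = star b * b"
    using ip_self_positive[of x] unfolding cstar_positive_def by blast
  have "submodule scM act (act x ` D)"
    by (rule submodule_act_image)
      (auto simp: D_def distrib_left scA_mult_right[symmetric] mult.assoc[symmetric])
  moreover have "norm w \<le> (norm g * norm b + 1) * norm (act x w)" if "w \<in> D" for w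
  proof -
    have "norm w = norm (g * (star b * (b * w)))"
      using that by (simp add: D_def b mult.assoc)
    also have "\<dots> \<le> norm g * norm b * norm (b * w)"
      by (metis mult.assoc mult_left_mono norm_ge_zero norm_mult_ineq norm_star order_trans)
    also have "\<dots> \<le> (norm g * norm b + 1) * norm (act x w)"
      by (simp add: norm_act_eq[OF b] mult_right_mono)
    finally show ?thesis .
  qed
  then have "closed (act x ` D)"
    by (intro closed_act_image) (auto simp: D_def subspace_def distrib_left add_nonneg_pos
        intro!: closed_Collect_eq continuous_intros)
  ultimately show ?thesis
    by (simp add: closed_submodule_def D_def)
qed

lemma submodule_meets_topologically_essential:
  assumes N: "topologically_essential scM act N"
    and K: "submodule scM act K" "x \<in> K" "x \<noteq> 0"
  shows "N \<inter> K \<noteq> {0}"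
proof -
  obtain b where b: "ip x x = star b * b"
    using ip_self_positive[of x] unfolding cstar_positive_def by blast
  have "star (ip x x) = ip x x" "ip x x \<noteq> 0"
    using star_ip ip_self_eq_0D K(3) by blast+
  then obtain e g where "e \<noteq> 0" and g: "g * (ip x x * e) = e"
    using selfadjoint_partial_inverse by blast
  define L where "L = act x ` {w. g * (ip x x * w) = w}"
  have L: "closed_submodule scM act L"
    unfolding L_def by (rule closed_submodule_act_image)
  have "act x e \<noteq> 0"
  proof
    assume "act x e = 0"
    then have "b * e = 0"
      using norm_act_eq[OF b, of e] by simp
    then show False
      using g \<open>e \<noteq> 0\<close> by (simp add: b mult.assoc)
  qed
  moreover have "act x e \<in> L"
    using g by (simp add: L_def)
  ultimately have "L \<noteq> {0}"
    by blast
  then have "N \<inter> L \<noteq> {0}"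
    using N L unfolding topologically_essential_def by blast
  moreover have "0 \<in> N \<inter> L"
    using N L unfolding topologically_essential_def closed_submodule_def submodule_def by blast
  moreover have "L \<subseteq> K"
    using K(1,2) unfolding L_def submodule_def by auto
  ultimately show ?thesis
    by blast
qed

end

theorem mainTheorem3:
  fixes scA :: "complex \<Rightarrow> 'a::{real_normed_algebra,banach} \<Rightarrow> 'a"
    and star :: "'a \<Rightarrow> 'a"
    and scM :: "complex \<Rightarrow> 'm::banach \<Rightarrow> 'm"
    and act :: "'m \<Rightarrow> 'a \<Rightarrow> 'm"
    and ip :: "'m \<Rightarrow> 'm \<Rightarrow> 'a"
    and N :: "'m set"
  assumes "cstar_algebra scA star"
    and "hilbert_module scA star scM act ip"
    and "topologically_essential scM act N"
  shows "essential scM act N"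
proof -
  have "N \<inter> K \<noteq> {0}" if K: "submodule scM act K" "K \<noteq> {0}" for K
  proof -
    have "0 \<in> K"
      using K(1) unfolding submodule_def by blast
    then obtain x where "x \<in> K" "x \<noteq> 0"
      using K(2) by blast
    then show ?thesis
      using submodule_meets_topologically_essential[OF assms K(1)] by blast
  qed
  then show ?thesis
    using assms(3) unfolding essential_def topologically_essential_def by blast
qed

end
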